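(* Let $\omega$ be a non-quasianalytic concave weight function and let $f:[0,\infty)\to[0,\infty)$ be any function with $\omega(t)=o(f(t))$ as $t\to\infty$. Then there exists a non-quasianalytic concave weight function $\tilde\omega$ such that $\omega(t)=o(\tilde\omega(t))$ and $\tilde\omega(t)=o(f(t))$ as $t\to\infty$.
   Context: A weight function is a continuous increasing $\omega:[0,\infty)\to[0,\infty)$ with $\omega(2t)=O(\omega(t))$, $\omega(t)=o(t)$, $\log t=o(\omega(t))$ as $t\to\infty$, and such that $t\mapsto\omega(e^t)$ is convex on $[0,\infty)$. It is non-quasianalytic if $\int_1^\infty\omega(t)t^{-2}\,dt<\infty$. *)

theory Defs
  imports "HOL-Analysis.Analysis" "HOL-Library.Landau_Symbols"
begin

text \<open>Weight functions omega : [0,inf) -> [0,inf), modelled as real functions whose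
  relevant behaviour is restricted to the half-line {0..}.\<close>
definition weight_function :: "(real \<Rightarrow> real) \<Rightarrow> bool" where
  "weight_function w \<longleftrightarrow>
     continuous_on {0..} w \<and>
     mono_on {0..} w \<and>
     (\<forall>t\<ge>0. w t \<ge> 0) \<and>
     (\<lambda>t. w (2 * t)) \<in> O[at_top](w) \<and>
     w \<in> o[at_top](\<lambda>t. t) \<and>
     (\<lambda>t. ln t) \<in> o[at_top](w) \<and>
     convex_on {0..} (\<lambda>t. w (exp t))"

definition non_quasianalytic :: "(real \<Rightarrow> real) \<Rightarrow> bool" where
  "non_quasianalytic w \<longleftrightarrow> (\<lambda>t. w t / t ^ 2) integrable_on {1..}"

definition concave_weight :: "(real \<Rightarrow> real) \<Rightarrow> bool" where
  "concave_weight w \<longleftrightarrow> weight_function w \<and> concave_on {0..} w"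

end

theory Submission
  imports Defs
begin

text \<open>
  Let \<open>\<delta>(t) = (\<omega>(t) - \<omega>(t/2)) / t\<close>. Concavity of \<open>\<omega>\<close> makes \<open>\<delta>\<close> decreasing,
  convexity of \<open>\<omega> \<circ> exp\<close> makes \<open>t \<delta>(t)\<close> increasing, and \<open>\<delta>\<close> is the derivative of
  \<open>L(t) = \<integral> \<omega>(u)/u du\<close> over \<open>[t/2, t]\<close>, where \<open>\<omega>(t)/4 \<le> L(t) \<le> \<omega>(t)\<close>.

  For \<open>y\<^sub>n\<^sub>+\<^sub>1 \<le> y\<^sub>n / 2\<close> let \<open>\<lambda>(x) = \<Sum>\<^sub>k min x y\<^sub>k = x \<phi>(x)\<close>. Then \<open>\<phi>\<close> is decreasing,
  \<open>\<phi>(x) \<ge> n + 1\<close> for \<open>x \<le> y\<^sub>n\<close> and \<open>\<phi>(x) \<le> n + 2\<close> for \<open>x \<ge> y\<^sub>n\<close>. The new weight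
  \<open>\<omega>'\<close> is a primitive of \<open>\<lambda> \<circ> \<delta> = \<delta> \<phi>(\<delta>)\<close>: this is decreasing and \<open>t \<delta>(t) \<phi>(\<delta>(t))\<close> is
  increasing, so \<open>\<omega>'\<close> is concave and \<open>\<omega>' \<circ> exp\<close> is convex. Comparing \<open>\<omega>'\<close> with
  \<open>\<phi>(\<delta>(a)) L\<close> on \<open>[a, t]\<close> gives
  \<open>\<phi>(\<delta>(a)) (\<omega>(t)/4 - \<omega>(a)) \<le> \<omega>'(t) \<le> \<omega>'(T\<^sub>0) + \<phi>(\<delta>(t)) \<omega>(t)\<close>, and since
  \<open>\<phi>(\<delta>(a)) \<rightarrow> \<infinity>\<close> the lower bound yields \<open>\<omega> = o(\<omega>')\<close>.

  Choose thresholds \<open>T\<^sub>n\<close> beyond which \<open>(n+3)\<^sup>2 \<omega>\<close> lies below \<open>f\<close> and below \<open>t\<close>, and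
  the tail \<open>R(t) = \<integral>\<^sub>t\<^sup>\<infinity> \<omega>(u)/u\<^sup>2 du + 1/t\<close> below \<open>(n+3)\<^sup>-\<^sup>2\<close>, and put
  \<open>y\<^sub>n = \<delta>(T\<^sub>n) / 2\<^sup>n\<close>. On \<open>[T\<^sub>n, T\<^sub>n\<^sub>+\<^sub>1)\<close> this gives \<open>\<phi>(\<delta>(t)) \<le> n + 3 \<le> R(t)\<^sup>-\<^sup>1\<^sup>/\<^sup>2\<close>,
  hence \<open>\<omega>' = o(f)\<close>, \<open>\<omega>' = o(t)\<close>, and \<open>\<omega>'(t)/t\<^sup>2 \<lesssim> -R'(t)/\<surd>R(t)\<close>, which is
  integrable because \<open>R\<close> is positive and decreasing.
\<close>

lemma convex_on_chord_slope_mono: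
  fixes f :: "real \<Rightarrow> real"
  assumes f: "convex_on I f" and I: "a1 \<in> I" "b2 \<in> I"
    and "a1 < b1" "a2 < b2" "a1 \<le> a2" "b1 \<le> b2"
  shows "(f b1 - f a1) / (b1 - a1) \<le> (f b2 - f a2) / (b2 - a2)"
proof -
  have swap: "(u - v) / (x - y) = (v - u) / (y - x)" for u v x y :: real
    by (metis minus_diff_eq minus_divide_divide)
  have "(f b1 - f a1) / (b1 - a1) \<le> (f b2 - f a1) / (b2 - a1)"
  proof (cases "b1 = b2")
    case False
    then show ?thesis
      using convex_on_slope_le(1)[OF f I, of b1] assms by (simp only: swap)
  qed simp
  also have "\<dots> \<le> (f b2 - f a2) / (b2 - a2)"
  proof (cases "a1 = a2")
    case False
    then show ?thesis
      using convex_on_slope_le(2)[OF f I, of a2] assms by (simp only: swap)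
  qed simp
  finally show ?thesis .
qed

lemma concave_on_double_le:
  fixes f :: "real \<Rightarrow> real"
  assumes "concave_on {0..} f" "0 \<le> f 0" "0 \<le> t"
  shows "f (2 * t) \<le> 2 * f t"
  using concave_onD[OF assms(1), of "1/2" 0 "2 * t"] assms(2,3) by simp

lemma integral_has_real_derivative_at:
  fixes g :: "real \<Rightarrow> real"
  assumes "continuous_on {a..} g" "a < t"
  shows "((\<lambda>x. integral {a..x} g) has_real_derivative g t) (at t)"
proof -
  have "continuous_on {a..t+1} g"
    using assms(1) by (rule continuous_on_subset) auto
  then have "((\<lambda>x. integral {a..x} g) has_real_derivative g t) (at t within {a..t+1})"
    using assms(2) by (intro integral_has_real_derivative) auto
  moreover have "at t within {a..t+1} = at t"
    by (rule at_within_interior) (use assms(2) in simp)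
  ultimately show ?thesis by simp
qed

lemma integral_atLeast_tendsto:
  fixes g :: "real \<Rightarrow> real"
  assumes g: "g integrable_on {a..}" and nonneg: "\<And>x. a \<le> x \<Longrightarrow> 0 \<le> g x"
  shows "((\<lambda>b. integral {a..b} g) \<longlongrightarrow> integral {a..} g) at_top"
proof -
  have abs: "g absolutely_integrable_on {a..}"
    using g nonneg by (intro nonnegative_absolutely_integrable_1) auto
  have "\<forall>\<^sub>F b in at_top. (LINT x:{a..b}|lebesgue. g x) = integral {a..b} g"
    by (intro always_eventually allI set_lebesgue_integral_eq_integral(2)
        set_integrable_subset[OF abs]) auto
  moreover have "((\<lambda>b. LINT x:{a..b}|lebesgue. g x) \<longlongrightarrow> (LINT x:{a..}|lebesgue. g x)) at_top"
    by (intro tendsto_set_lebesgue_integral_at_top abs) auto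
  ultimately show ?thesis
    using set_lebesgue_integral_eq_integral(2)[OF abs] by (simp add: tendsto_cong)
qed

lemma concave_weightI:
  fixes W :: "real \<Rightarrow> real"
  assumes "continuous_on {0..} W" "mono_on {0..} W" "\<And>t. 0 \<le> t \<Longrightarrow> 0 \<le> W t"
    and concave: "concave_on {0..} W" and "convex_on {0..} (\<lambda>t. W (exp t))"
    and "W \<in> o[at_top](\<lambda>t. t)" "(\<lambda>t. ln t) \<in> o[at_top](W)"
  shows "concave_weight W"
proof -
  have "\<forall>\<^sub>F t in at_top. norm (W (2 * t)) \<le> 2 * norm (W t)"
    using eventually_ge_at_top[of "0::real"]
  proof eventually_elim
    case (elim t)
    then show ?case
      using concave_on_double_le[OF concave, of t] assms(3)[of 0] assms(3)[of t]
        assms(3)[of "2 * t"] by simp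
  qed
  then have "(\<lambda>t. W (2 * t)) \<in> O[at_top](W)"
    by (intro landau_o.bigI[of 2]) auto
  then show ?thesis
    using assms unfolding concave_weight_def weight_function_def by auto
qed

lemma thresholds_at_top:
  fixes P :: "nat \<Rightarrow> real \<Rightarrow> bool"
  assumes "\<And>n. eventually (P n) at_top"
  obtains T where "\<And>n. T n + 1 \<le> T (Suc n)" "\<And>n t. T n \<le> t \<Longrightarrow> P n t"
proof -
  obtain G where G: "\<And>n t. G n \<le> t \<Longrightarrow> P n t"
    using assms unfolding eventually_at_top_linorder by metis
  define T where "T n = real n + (\<Sum>k\<le>n. \<bar>G k\<bar>)" for n
  show ?thesis
  proof
    show "T n + 1 \<le> T (Suc n)" for n
      by (simp add: T_def)
    fix n t
    assume "T n \<le> t"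
    moreover have "G n \<le> T n"
      using member_le_sum[of n "{..n}" "\<lambda>k. \<bar>G k\<bar>"] unfolding T_def by auto
    ultimately show "P n t"
      using G by force
  qed
qed

lemma threshold_interval:
  fixes T :: "nat \<Rightarrow> real"
  assumes step: "\<And>n. T n + 1 \<le> T (Suc n)" and "T N \<le> t"
  obtains n where "N \<le> n" "T n \<le> t" "t < T (Suc n)"
proof -
  have T_ge: "T 0 + real n \<le> T n" for n
    by (induction n) (use step in \<open>auto intro: order.trans[OF _ step]\<close>)
  have T_mono: "mono T"
    by (rule incseq_SucI) (use step in \<open>auto intro: order.trans[OF _ step]\<close>)
  obtain k :: nat where "t - T 0 < real k"
    using reals_Archimedean2 by blast
  then have ex: "\<exists>k. t < T k"
    using T_ge by (metis add.commute diff_less_eq order_less_le_trans)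
  define k where "k = (LEAST k. t < T k)"
  have tk: "t < T k"
    unfolding k_def by (rule LeastI_ex[OF ex])
  have "N < k"
  proof (rule ccontr)
    assume "\<not> N < k"
    then have "T k \<le> T N"
      using T_mono by (simp add: monoD)
    with tk assms(2) show False
      by simp
  qed
  then obtain n where n: "k = Suc n" "N \<le> n"
    by (cases k) auto
  have "T n \<le> t"
    using not_less_Least[of n "\<lambda>k. t < T k"] n unfolding k_def by simp
  then show ?thesis
    using that n tk by blast
qed

lemma has_integral_div_sqrt:
  fixes G R :: "real \<Rightarrow> real"
  assumes G: "continuous_on {a..} G" "\<And>t. a \<le> t \<Longrightarrow> 0 \<le> G t"
    and R: "\<And>t. a \<le> t \<Longrightarrow> (R has_real_derivative - G t) (at t)"
      "\<And>t. a \<le> t \<Longrightarrow> 0 < R t" "(R \<longlongrightarrow> 0) at_top"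
  shows "((\<lambda>t. G t / sqrt (R t)) has_integral 2 * sqrt (R a)) {a..}"
proof -
  let ?H = "\<lambda>t. G t / sqrt (R t)"
  have deriv: "((\<lambda>t. - 2 * sqrt (R t)) has_real_derivative ?H t) (at t)" if "a \<le> t" for t
    using that R(2)[OF that]
    by (auto intro!: derivative_eq_intros R(1)[OF that] simp: field_simps)
  have integral: "(?H has_integral 2 * sqrt (R a) - 2 * sqrt (R b)) {a..b}" if "a \<le> b" for b
    using fundamental_theorem_of_calculus[OF that, of "\<lambda>t. - 2 * sqrt (R t)" ?H] deriv
    by (auto simp: has_real_derivative_iff_has_vector_derivative[symmetric]
        intro: has_field_derivative_at_within)
  show ?thesis
  proof (rule has_integral_to_inf)
    show "?H integrable_on {a..b}" for b
      using integral by (cases "a \<le> b") auto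
    show "0 \<le> ?H t" if "a \<le> t" for t
      using G(2)[OF that] R(2)[OF that] by simp
    have "((\<lambda>b. 2 * sqrt (R a) - 2 * sqrt (R b)) \<longlongrightarrow> 2 * sqrt (R a) - 2 * sqrt 0) at_top"
      by (intro tendsto_intros R(3))
    moreover have "\<forall>\<^sub>F b in at_top. integral {a..b} ?H = 2 * sqrt (R a) - 2 * sqrt (R b)"
      using eventually_ge_at_top[of a] by eventually_elim (use integral in blast)
    ultimately show "((\<lambda>b. integral {a..b} ?H) \<longlongrightarrow> 2 * sqrt (R a)) at_top"
      by (simp add: tendsto_cong)
  qed
qed

locale halving_seq =
  fixes y :: "nat \<Rightarrow> real"
  assumes pos: "0 < y n" and halving: "y (Suc n) \<le> y n / 2"
begin

lemma le_shift: "y (k + n) \<le> y n / 2 ^ k"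
proof (induction k)
  case (Suc k)
  have "y (Suc k + n) \<le> y (k + n) / 2"
    using halving by simp
  also have "\<dots> \<le> y n / 2 ^ k / 2"
    using Suc by simp
  finally show ?case
    by simp
qed simp

lemma antimono: "m \<le> n \<Longrightarrow> y n \<le> y m"
proof -
  have "y (Suc k) \<le> y k" for k
    using halving[of k] pos[of k] by linarith
  then have "decseq y"
    by (rule decseq_SucI)
  then show "m \<le> n \<Longrightarrow> y n \<le> y m"
    by (simp add: decseqD)
qed

lemma summable: "summable y"
proof (rule summable_comparison_test')
  show "summable (\<lambda>k. y 0 * (1/2) ^ k)"
    by (intro summable_mult) simp
  show "norm (y k) \<le> y 0 * (1/2) ^ k" for k
    using le_shift[of k 0] pos[of k] by (simp add: power_divide)
qed

definition sum_min :: "real \<Rightarrow> real" where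
  "sum_min x = (\<Sum>k. min x (y k))"

definition phi :: "real \<Rightarrow> real" where
  "phi x = sum_min x / x"

lemma min_bounded: "0 \<le> x \<Longrightarrow> norm (min x (y k)) \<le> y k"
  using pos[of k] by auto

lemma summable_min: "0 \<le> x \<Longrightarrow> summable (\<lambda>k. min x (y k))"
  by (rule summable_comparison_test'[OF summable min_bounded])

lemma sum_min_nonneg: "0 \<le> x \<Longrightarrow> 0 \<le> sum_min x"
  unfolding sum_min_def using pos by (intro suminf_nonneg summable_min) (auto simp: less_imp_le)

lemma sum_min_mono: "0 \<le> x \<Longrightarrow> x \<le> x' \<Longrightarrow> sum_min x \<le> sum_min x'"
  unfolding sum_min_def by (rule suminf_le) (auto intro: summable_min)

lemma sum_min_continuous: "continuous_on {0..} sum_min"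
proof (rule uniform_limit_theorem)
  show "uniform_limit {0..} (\<lambda>n x. \<Sum>k<n. min x (y k)) sum_min sequentially"
    unfolding sum_min_def by (rule Weierstrass_m_test[OF min_bounded summable]) simp
qed (intro always_eventually allI continuous_intros, simp)

lemma sum_min_eq: "0 < x \<Longrightarrow> sum_min x = x * phi x"
  unfolding phi_def by simp

lemma phi_nonneg: "0 < x \<Longrightarrow> 0 \<le> phi x"
  unfolding phi_def using sum_min_nonneg by simp

lemma phi_antimono:
  assumes "0 < x" "x \<le> x'"
  shows "phi x' \<le> phi x"
proof -
  have "(\<Sum>k. min x' (y k) / x') \<le> (\<Sum>k. min x (y k) / x)"
  proof (rule suminf_le)
    show "min x' (y k) / x' \<le> min x (y k) / x" for k
      using assms pos[of k] by (auto simp: min_def field_simps mult_left_mono)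
  qed (use assms in \<open>auto intro!: summable_divide summable_min\<close>)
  then show ?thesis
    using assms unfolding phi_def sum_min_def
    by (simp add: suminf_divide[symmetric] summable_min)
qed

lemma phi_ge:
  assumes "0 < x" "x \<le> y n"
  shows "real n + 1 \<le> phi x"
proof -
  have "(\<Sum>k<Suc n. x) = (\<Sum>k<Suc n. min x (y k))"
    by (rule sum.cong) (use assms antimono in \<open>auto simp: min_def intro: order.trans\<close>)
  also have "\<dots> \<le> sum_min x"
    unfolding sum_min_def using assms pos
    by (intro sum_le_suminf summable_min) (auto simp: less_imp_le)
  finally show ?thesis
    unfolding phi_def using assms by (simp add: field_simps)
qed

lemma phi_le:
  assumes "y n \<le> x"
  shows "phi x \<le> real n + 2"
proof -
  have x: "0 < x"
    using pos[of n] assms by linarith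
  have s: "summable (\<lambda>k. min x (y k))"
    using x by (intro summable_min) simp
  have "sum_min x = (\<Sum>k. min x (y (k + n))) + (\<Sum>k<n. min x (y k))"
    unfolding sum_min_def by (rule suminf_split_initial_segment[OF s])
  also have "(\<Sum>k. min x (y (k + n))) \<le> (\<Sum>k. y n * (1/2) ^ k)"
  proof (rule suminf_le)
    show "summable (\<lambda>k. min x (y (k + n)))"
      using summable_iff_shift[where f="\<lambda>k. min x (y k)" and k=n] s by simp
    show "min x (y (k + n)) \<le> y n * (1/2) ^ k" for k
      using le_shift[of k n] by (simp add: power_divide min_le_iff_disj)
  qed (intro summable_mult, simp)
  also have "(\<Sum>k. y n * (1/2) ^ k) = 2 * y n"
    by (subst suminf_mult) (auto simp: suminf_geometric)
  also have "(\<Sum>k<n. min x (y k)) \<le> (\<Sum>k<n. x)"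
    by (intro sum_mono) simp
  finally have "sum_min x \<le> (real n + 2) * x"
    using assms by (simp add: algebra_simps)
  then show ?thesis
    unfolding phi_def using x by (simp add: field_simps)
qed

end

locale nq_concave_weight =
  fixes w :: "real \<Rightarrow> real"
  assumes concave_weight: "concave_weight w" and non_quasianalytic: "non_quasianalytic w"
begin

lemma
  shows w_continuous: "continuous_on {0..} w"
    and w_mono_on: "mono_on {0..} w"
    and w_nonneg: "0 \<le> t \<Longrightarrow> 0 \<le> w t"
    and w_concave: "concave_on {0..} w"
    and w_exp_convex: "convex_on {0..} (\<lambda>t. w (exp t))"
    and w_smallo_id: "w \<in> o[at_top](\<lambda>t. t)"
    and ln_smallo_w: "(\<lambda>t. ln t) \<in> o[at_top](w)"
    and w_div_square_integrable: "(\<lambda>t. w t / t ^ 2) integrable_on {1..}"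
  using concave_weight non_quasianalytic
  unfolding concave_weight_def weight_function_def non_quasianalytic_def by auto

lemma w_mono: "0 \<le> s \<Longrightarrow> s \<le> t \<Longrightarrow> w s \<le> w t"
  using w_mono_on by (auto simp: mono_on_def)

lemma w_at_top: "filterlim w at_top at_top"
proof -
  have "\<forall>\<^sub>F t in at_top. ln t \<le> w t"
    using landau_o.smallD[OF ln_smallo_w zero_less_one] eventually_ge_at_top[of 1]
    by eventually_elim (auto simp: w_nonneg)
  then show ?thesis
    using filterlim_at_top_mono ln_at_top by blast
qed

lemma w_log_chord_mono:
  assumes "1 \<le> a1" "a1 < b1" "a2 < b2" "a1 \<le> a2" "b1 \<le> b2"
  shows "(w b1 - w a1) / ln (b1 / a1) \<le> (w b2 - w a2) / ln (b2 / a2)"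
proof -
  have "(w (exp (ln b1)) - w (exp (ln a1))) / (ln b1 - ln a1)
      \<le> (w (exp (ln b2)) - w (exp (ln a2))) / (ln b2 - ln a2)"
    using assms by (intro convex_on_chord_slope_mono[OF w_exp_convex]) auto
  then show ?thesis
    using assms by (simp add: ln_div)
qed

definition dw :: "real \<Rightarrow> real" where
  "dw t = (w t - w (t / 2)) / t"

lemma dw_antimono:
  assumes "0 < s" "s \<le> t"
  shows "dw t \<le> dw s"
proof -
  have "convex_on {0..} (\<lambda>x. - w x)"
    using w_concave by (simp add: concave_on_def)
  then have "(- w s + w (s/2)) / (s - s/2) \<le> (- w t + w (t/2)) / (t - t/2)"
    using convex_on_chord_slope_mono[of "{0..}" "\<lambda>x. - w x" "s/2" t s "t/2"] assms by simp
  then show ?thesis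
    using assms unfolding dw_def by (simp add: field_simps)
qed

lemma t_dw_eq: "0 < t \<Longrightarrow> t * dw t = w t - w (t / 2)"
  unfolding dw_def by simp

lemma t_dw_mono:
  assumes "2 \<le> s" "s \<le> t"
  shows "s * dw s \<le> t * dw t"
proof -
  have "(w s - w (s/2)) / ln 2 \<le> (w t - w (t/2)) / ln 2"
    using w_log_chord_mono[of "s/2" s "t/2" t] assms by simp
  then show ?thesis
    using assms by (simp add: t_dw_eq divide_le_cancel)
qed

lemma dw_nonneg: "0 < t \<Longrightarrow> 0 \<le> dw t"
  unfolding dw_def by (intro divide_nonneg_pos) (auto intro!: w_mono)

lemma dw_tendsto_0: "(dw \<longlongrightarrow> 0) at_top"
proof (rule tendstoI)
  fix e :: real
  assume e: "e > 0"
  show "\<forall>\<^sub>F t in at_top. dist (dw t) 0 < e"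
    using landau_o.smallD[OF w_smallo_id half_gt_zero[OF e]] eventually_gt_at_top[of 0]
  proof eventually_elim
    case (elim t)
    then have "w t / t \<le> e/2"
      using w_nonneg[of t] by (simp add: field_simps)
    moreover have "dw t \<le> w t / t"
      unfolding dw_def using elim w_nonneg[of "t/2"] by (simp add: divide_right_mono)
    ultimately have "dw t < e"
      using e by linarith
    then show ?case
      using dw_nonneg[of t] elim by simp
  qed
qed

lemma dw_eventually_pos: "\<forall>\<^sub>F t in at_top. 0 < dw t"
proof -
  have "\<forall>\<^sub>F t in at_top. 8 \<le> t \<and> w 4 < w t"
    using w_at_top eventually_ge_at_top[of 8] by (simp add: filterlim_at_top_dense eventually_conj)
  then obtain t1 where t1: "8 \<le> t1" "w 4 < w t1"
    using eventually_happens'[of at_top] by force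
  show ?thesis
    using eventually_ge_at_top[of t1]
  proof eventually_elim
    case (elim t)
    have "0 < (w t1 - w 4) / ln (t1 / 4)"
      using t1 by simp
    also have "\<dots> \<le> (w t - w (t/2)) / ln (t / (t/2))"
      using t1 elim by (intro w_log_chord_mono) auto
    finally show ?case
      using t1 elim by (simp add: dw_def zero_less_divide_iff)
  qed
qed

lemma dw_continuous: "continuous_on {0<..} dw"
proof -
  have "continuous_on {0<..} w"
    by (rule continuous_on_subset[OF w_continuous]) auto
  moreover have "continuous_on {0<..} (\<lambda>t. w (t / 2))"
    by (rule continuous_on_compose2[OF w_continuous]) (auto intro!: continuous_intros)
  ultimately show ?thesis
    unfolding dw_def by (intro continuous_intros) auto
qed

lemma w_div_id_continuous: "continuous_on {1..} (\<lambda>u. w u / u)"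
  by (intro continuous_intros continuous_on_subset[OF w_continuous]) auto

definition w_window :: "real \<Rightarrow> real" where
  "w_window t = integral {1..t} (\<lambda>u. w u / u) - integral {1..t/2} (\<lambda>u. w u / u)"

lemma w_window_deriv:
  assumes "2 < t"
  shows "(w_window has_real_derivative dw t) (at t)"
proof -
  let ?P = "\<lambda>x. integral {1..x} (\<lambda>u. w u / u)"
  have deriv: "(?P has_real_derivative w x / x) (at x)" if "1 < x" for x
    using integral_has_real_derivative_at[OF w_div_id_continuous that] .
  have "((\<lambda>x. ?P (x / 2)) has_real_derivative w (t/2) / (t/2) * (1/2)) (at t)"
    by (rule DERIV_chain2[OF deriv]) (use assms in \<open>auto intro!: derivative_eq_intros\<close>)
  then have "(w_window has_real_derivative w t / t - w (t/2) / (t/2) * (1/2)) (at t)"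
    unfolding w_window_def[abs_def] using assms by (intro DERIV_diff deriv) auto
  then show ?thesis
    using assms unfolding dw_def by (simp add: field_simps)
qed

lemma w_window_eq:
  assumes "2 \<le> t"
  shows "w_window t = integral {t/2..t} (\<lambda>u. w u / u)"
proof -
  have "(\<lambda>u. w u / u) integrable_on {1..t}"
    by (intro integrable_continuous_interval continuous_on_subset[OF w_div_id_continuous]) auto
  then have "integral {1..t/2} (\<lambda>u. w u / u) + integral {t/2..t} (\<lambda>u. w u / u)
      = integral {1..t} (\<lambda>u. w u / u)"
    using assms by (intro Henstock_Kurzweil_Integration.integral_combine) auto
  then show ?thesis
    unfolding w_window_def by linarith
qed

lemma w_window_bounds:
  assumes t: "2 \<le> t"
  shows "w t / 4 \<le> w_window t" "w_window t \<le> w t"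
proof -
  have int: "(\<lambda>u. w u / u) integrable_on {t/2..t}"
    by (intro integrable_continuous_interval continuous_on_subset[OF w_div_id_continuous])
      (use t in auto)
  have "integral {t/2..t} (\<lambda>u. w (t/2) / t) \<le> integral {t/2..t} (\<lambda>u. w u / u)"
  proof (rule integral_le[OF integrable_const_ivl int])
    fix u
    assume u: "u \<in> {t/2..t}"
    then have "w (t/2) * (1/t) \<le> w u * (1/u)"
      using t by (intro mult_mono w_mono w_nonneg) (auto simp: field_simps)
    then show "w (t/2) / t \<le> w u / u"
      by simp
  qed
  moreover have "w t \<le> 2 * w (t/2)"
    using concave_on_double_le[OF w_concave w_nonneg, of "t/2"] t by simp
  ultimately show "w t / 4 \<le> w_window t"
    using t by (simp add: w_window_eq)
  have "integral {t/2..t} (\<lambda>u. w u / u) \<le> integral {t/2..t} (\<lambda>u. 2 * w t / t)"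
  proof (rule integral_le[OF int integrable_const_ivl])
    fix u
    assume u: "u \<in> {t/2..t}"
    then have "w u * (1/u) \<le> w t * (2/t)"
      using t by (intro mult_mono w_mono w_nonneg) (auto simp: field_simps)
    then show "w u / u \<le> 2 * w t / t"
      by (simp add: mult.commute)
  qed
  then show "w_window t \<le> w t"
    using t by (simp add: w_window_eq)
qed

text \<open>The summand \<open>1/t\<close> makes \<open>tail\<close> positive outright, and its derivative supplies the
  \<open>+ 1\<close> that absorbs the constant \<open>wt T0\<close> in \<open>wt_le_tail\<close>.\<close>

definition tail :: "real \<Rightarrow> real" where
  "tail t = integral {1..} (\<lambda>u. w u / u ^ 2) - integral {1..t} (\<lambda>u. w u / u ^ 2) + 1 / t"

lemma w_div_square_continuous: "continuous_on {1..} (\<lambda>u. w u / u ^ 2)"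
  by (intro continuous_intros continuous_on_subset[OF w_continuous]) auto

lemma tail_pos:
  assumes "0 < t"
  shows "0 < tail t"
proof -
  have "integral {1..t} (\<lambda>u. w u / u ^ 2) \<le> integral {1..} (\<lambda>u. w u / u ^ 2)"
    by (intro integral_subset_le w_div_square_integrable integrable_continuous_interval
        continuous_on_subset[OF w_div_square_continuous]) (auto simp: w_nonneg)
  moreover have "0 < 1 / t"
    using assms by simp
  ultimately show ?thesis
    unfolding tail_def by linarith
qed

lemma tail_deriv:
  assumes "1 < t"
  shows "(tail has_real_derivative - ((w t + 1) / t ^ 2)) (at t)"
proof -
  have "((\<lambda>x. integral {1..x} (\<lambda>u. w u / u ^ 2)) has_real_derivative w t / t ^ 2) (at t)"
    by (rule integral_has_real_derivative_at[OF w_div_square_continuous assms])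
  then show ?thesis
    unfolding tail_def[abs_def] using assms
    by (auto intro!: derivative_eq_intros simp: field_simps power2_eq_square)
qed

lemma tail_tendsto_0: "(tail \<longlongrightarrow> 0) at_top"
proof -
  have "((\<lambda>t. integral {1..t} (\<lambda>u. w u / u ^ 2))
      \<longlongrightarrow> integral {1..} (\<lambda>u. w u / u ^ 2)) at_top"
    by (intro integral_atLeast_tendsto w_div_square_integrable) (simp add: w_nonneg)
  then have "(tail \<longlongrightarrow>
      integral {1..} (\<lambda>u. w u / u ^ 2) - integral {1..} (\<lambda>u. w u / u ^ 2) + 0) at_top"
    unfolding tail_def[abs_def] using tendsto_inverse_0_at_top[OF filterlim_ident]
    by (intro tendsto_intros) (simp_all add: inverse_eq_divide)
  then show ?thesis
    by simp
qed

lemma integrable_div_sqrt_tail: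
  assumes "1 < a"
  shows "(\<lambda>t. (w t + 1) / t ^ 2 / sqrt (tail t)) integrable_on {a..}"
proof (rule has_integral_integrable[OF has_integral_div_sqrt])
  show "continuous_on {a..} (\<lambda>t. (w t + 1) / t ^ 2)"
    using assms by (intro continuous_intros continuous_on_subset[OF w_continuous]) auto
  show "0 \<le> (w t + 1) / t ^ 2" if "a \<le> t" for t
    using w_nonneg[of t] that assms by simp
qed (use assms in \<open>auto intro: tail_deriv tail_pos tail_tendsto_0\<close>)

end

locale nq_concave_weight_below = nq_concave_weight +
  fixes f :: "real \<Rightarrow> real"
  assumes f_nonneg: "\<And>t. 0 \<le> t \<Longrightarrow> 0 \<le> f t" and w_smallo_f: "w \<in> o[at_top](f)"
begin

definition T0 :: real where
  "T0 = (SOME T. 4 \<le> T \<and> (\<forall>t\<ge>T. 0 < dw t))"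

lemma T0: "4 \<le> T0" "T0 \<le> t \<Longrightarrow> 0 < dw t"
proof -
  have "\<exists>T. 4 \<le> T \<and> (\<forall>t\<ge>T. 0 < dw t)"
    using dw_eventually_pos unfolding eventually_at_top_linorder
    by (metis max.cobounded1 max.cobounded2 order.trans)
  from someI_ex[OF this] show "4 \<le> T0" "T0 \<le> t \<Longrightarrow> 0 < dw t"
    unfolding T0_def by auto
qed

definition small_at :: "nat \<Rightarrow> real \<Rightarrow> bool" where
  "small_at n t \<longleftrightarrow> T0 \<le> t \<and> tail t \<le> 1 / (real n + 3)\<^sup>2 \<and>
     (real n + 3)\<^sup>2 * w t \<le> f t \<and> (real n + 3)\<^sup>2 * w t \<le> t"

lemma eventually_small_at: "eventually (small_at n) at_top"
proof -
  define c where "c = 1 / (real n + 3)\<^sup>2"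
  have c: "0 < c"
    unfolding c_def by simp
  have "\<forall>\<^sub>F t in at_top. tail t < c"
    using order_tendstoD(2)[OF tail_tendsto_0 c] .
  moreover have "\<forall>\<^sub>F t in at_top. norm (w t) \<le> c * norm (f t)"
    using landau_o.smallD[OF w_smallo_f c] .
  moreover have "\<forall>\<^sub>F t in at_top. norm (w t) \<le> c * norm t"
    using landau_o.smallD[OF w_smallo_id c] .
  ultimately show ?thesis
    using eventually_ge_at_top[of T0]
  proof eventually_elim
    case (elim t)
    then have "w t \<le> c * f t" "w t \<le> c * t"
      using T0(1) w_nonneg[of t] f_nonneg[of t] by auto
    then show ?case
      using elim unfolding small_at_def c_def by (auto simp: field_simps)
  qed
qed

definition T :: "nat \<Rightarrow> real" where
  "T = (SOME T. (\<forall>n. T n + 1 \<le> T (Suc n)) \<and>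
     (\<forall>n t. T n \<le> t \<longrightarrow> small_at n t))"

lemma T_step: "T n + 1 \<le> T (Suc n)" and T_small_at: "T n \<le> t \<Longrightarrow> small_at n t"
proof -
  have "\<exists>T. (\<forall>n. T n + 1 \<le> T (Suc n)) \<and> (\<forall>n t. T n \<le> t \<longrightarrow> small_at n t)"
    using thresholds_at_top[of small_at, OF eventually_small_at] by metis
  from someI_ex[OF this] show "T n + 1 \<le> T (Suc n)" "T n \<le> t \<Longrightarrow> small_at n t"
    unfolding T_def by auto
qed

lemma T0_le_T: "T0 \<le> T n"
  using T_small_at[of n "T n"] unfolding small_at_def by simp

definition y :: "nat \<Rightarrow> real" where
  "y n = dw (T n) / 2 ^ n"

sublocale y: halving_seq y
proof
  show "0 < y n" for n
    unfolding y_def using T0(2)[OF T0_le_T] by simp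
  show "y (Suc n) \<le> y n / 2" for n
  proof -
    have "dw (T (Suc n)) \<le> dw (T n)"
      using T_step[of n] T0_le_T[of n] T0(1) by (intro dw_antimono) auto
    then have "dw (T (Suc n)) / 2 ^ Suc n \<le> dw (T n) / 2 ^ Suc n"
      by (rule divide_right_mono) simp
    then show ?thesis
      unfolding y_def by simp
  qed
qed

definition dwt :: "real \<Rightarrow> real" where
  "dwt t = y.sum_min (dw (max t T0))"

lemma dwt_eq: "T0 \<le> t \<Longrightarrow> dwt t = dw t * y.phi (dw t)"
  unfolding dwt_def using T0(2)[of t] by (simp add: y.sum_min_eq max_def)

lemma dwt_nonneg: "0 \<le> dwt t"
  unfolding dwt_def using T0(2)[of "max t T0"] by (simp add: y.sum_min_nonneg)

lemma dwt_antimono: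
  assumes "s \<le> t"
  shows "dwt t \<le> dwt s"
proof -
  have "0 < dw (max t T0)"
    by (rule T0(2)) simp
  moreover have "dw (max t T0) \<le> dw (max s T0)"
    by (rule dw_antimono) (use assms T0(1) in auto)
  ultimately show ?thesis
    unfolding dwt_def by (intro y.sum_min_mono) simp_all
qed

lemma t_dwt_mono:
  assumes "0 \<le> s" "s \<le> t"
  shows "s * dwt s \<le> t * dwt t"
proof -
  have beyond_T0: "s * dwt s \<le> t * dwt t" if st: "T0 \<le> s" "s \<le> t" for s t
  proof -
    have pos: "0 < dw s" "0 < dw t"
      using st T0(2) by auto
    have "s * dw s \<le> t * dw t"
      by (rule t_dw_mono) (use st T0(1) in auto)
    moreover have "y.phi (dw s) \<le> y.phi (dw t)"
      by (rule y.phi_antimono) (use pos st T0(1) in \<open>auto intro: dw_antimono\<close>)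
    ultimately have "(s * dw s) * y.phi (dw s) \<le> (t * dw t) * y.phi (dw t)"
      using pos st T0(1) by (rule_tac mult_mono) (auto intro: y.phi_nonneg)
    then show ?thesis
      using st by (simp add: dwt_eq mult.assoc)
  qed
  show ?thesis
  proof (cases "T0 \<le> s")
    case False
    then have const: "dwt s = dwt T0"
      unfolding dwt_def by (simp add: max_def)
    show ?thesis
    proof (cases "t \<le> T0")
      case True
      then have "dwt t = dwt T0"
        unfolding dwt_def by (simp add: max_def)
      then show ?thesis
        using const assms dwt_nonneg by (simp add: mult_right_mono)
    next
      case t: False
      have "s * dwt T0 \<le> T0 * dwt T0"
        using False dwt_nonneg by (intro mult_right_mono) auto
      also have "\<dots> \<le> t * dwt t"
        using t by (intro beyond_T0) auto
      finally show ?thesis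
        using const by simp
    qed
  qed (use beyond_T0 assms in auto)
qed

lemma dwt_continuous: "continuous_on UNIV dwt"
proof -
  have "continuous_on UNIV (\<lambda>t. dw (max t T0))"
    using T0(1) by (intro continuous_on_compose2[OF dw_continuous] continuous_intros) auto
  then show ?thesis
    unfolding dwt_def using T0(2)
    by (intro continuous_on_compose2[OF y.sum_min_continuous]) (auto simp: less_imp_le)
qed

text \<open>Integrating from \<open>-1\<close> rather than \<open>0\<close> gives \<open>wt\<close> a two-sided derivative at \<open>0\<close>.\<close>

definition wt :: "real \<Rightarrow> real" where
  "wt t = integral {-1..t} dwt"

lemma wt_deriv: "-1 < t \<Longrightarrow> (wt has_real_derivative dwt t) (at t)"
  unfolding wt_def[abs_def]
  by (rule integral_has_real_derivative_at[OF continuous_on_subset[OF dwt_continuous]]) auto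

lemma wt_mono: "0 \<le> s \<Longrightarrow> s \<le> t \<Longrightarrow> wt s \<le> wt t"
  by (rule deriv_nonneg_imp_mono[OF wt_deriv dwt_nonneg]) auto

lemma wt_nonneg: "0 \<le> t \<Longrightarrow> 0 \<le> wt t"
proof -
  have "0 \<le> wt 0"
    unfolding wt_def
    by (intro integral_nonneg integrable_continuous_interval
        continuous_on_subset[OF dwt_continuous] dwt_nonneg) auto
  then show "0 \<le> t \<Longrightarrow> 0 \<le> wt t"
    using wt_mono[of 0 t] by simp
qed

lemma wt_continuous: "continuous_on {0..} wt"
  by (intro continuous_at_imp_continuous_on ballI DERIV_isCont[OF wt_deriv]) auto

lemma wt_concave: "concave_on {0..} wt"
  unfolding concave_on_def
proof (rule convex_on_realI[where f'="\<lambda>t. - dwt t"])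
  show "((\<lambda>t. - wt t) has_real_derivative - dwt t) (at t)" if "t \<in> {0..}" for t
    using that by (intro DERIV_minus wt_deriv) auto
qed (auto intro: dwt_antimono)

lemma wt_exp_convex: "convex_on {0..} (\<lambda>s. wt (exp s))"
proof (rule convex_on_realI[where f'="\<lambda>s. dwt (exp s) * exp s"])
  show "((\<lambda>s. wt (exp s)) has_real_derivative dwt (exp s) * exp s) (at s)" for s
    by (rule DERIV_chain2[OF wt_deriv DERIV_exp]) (use exp_gt_zero[of s] in linarith)
  show "dwt (exp s) * exp s \<le> dwt (exp s') * exp s'" if "s \<le> s'" for s s'
    using t_dwt_mono[of "exp s" "exp s'"] that by (simp add: mult.commute)
qed simp

lemma wt_upper:
  assumes "T0 \<le> t"
  shows "wt t \<le> wt T0 + y.phi (dw t) * w t"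
proof -
  define c where "c = y.phi (dw t)"
  have c: "0 \<le> c"
    unfolding c_def using T0(2)[OF assms] by (rule y.phi_nonneg)
  have "c * w_window T0 - wt T0 \<le> c * w_window t - wt t"
  proof (rule deriv_nonneg_imp_mono[OF _ _ assms])
    fix u
    assume u: "u \<in> {T0..t}"
    show "((\<lambda>u. c * w_window u - wt u) has_real_derivative c * dw u - dwt u) (at u)"
      using u T0(1) by (intro DERIV_diff DERIV_cmult w_window_deriv wt_deriv) auto
    have "y.phi (dw u) \<le> c"
      unfolding c_def using u T0 by (intro y.phi_antimono dw_antimono) auto
    then show "0 \<le> c * dw u - dwt u"
      using u T0(2)[of u] by (simp add: dwt_eq mult_left_mono algebra_simps)
  qed
  moreover have "w_window t \<le> w t" "0 \<le> w_window T0"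
    using w_window_bounds[of t] w_window_bounds[of T0] w_nonneg[of T0] T0(1) assms by auto
  ultimately have "wt t \<le> wt T0 + c * w t"
    using c by (smt (verit) mult_left_mono right_diff_distrib)
  then show ?thesis
    unfolding c_def .
qed

lemma wt_lower:
  assumes "T0 \<le> a" "a \<le> t"
  shows "y.phi (dw a) * (w t / 4 - w a) \<le> wt t"
proof -
  define c where "c = y.phi (dw a)"
  have c: "0 \<le> c"
    unfolding c_def using T0(2)[OF assms(1)] by (rule y.phi_nonneg)
  have "wt a - c * w_window a \<le> wt t - c * w_window t"
  proof (rule deriv_nonneg_imp_mono[OF _ _ assms(2)])
    fix u
    assume u: "u \<in> {a..t}"
    show "((\<lambda>u. wt u - c * w_window u) has_real_derivative dwt u - c * dw u) (at u)"
      using u assms T0(1) by (intro DERIV_diff DERIV_cmult w_window_deriv wt_deriv) auto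
    have "c \<le> y.phi (dw u)"
      unfolding c_def using u assms T0 by (intro y.phi_antimono dw_antimono) auto
    then show "0 \<le> dwt u - c * dw u"
      using u assms T0(2)[of u] by (simp add: dwt_eq mult_left_mono algebra_simps)
  qed
  moreover have "w t / 4 \<le> w_window t" "w_window a \<le> w a"
    using w_window_bounds[of t] w_window_bounds[of a] T0(1) assms by auto
  moreover have "0 \<le> wt a"
    using assms T0(1) by (intro wt_nonneg) simp
  ultimately have "c * (w t / 4 - w a) \<le> wt t"
    using c by (smt (verit) mult_left_mono right_diff_distrib)
  then show ?thesis
    unfolding c_def .
qed

lemma phi_dw_le:
  assumes "T N \<le> t"
  obtains n where "N \<le> n" "small_at n t" "y.phi (dw t) \<le> real n + 3"
proof -
  obtain n where n: "N \<le> n" "T n \<le> t" "t < T (Suc n)"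
    using threshold_interval[OF T_step assms] by blast
  have "y (Suc n) \<le> dw (T (Suc n))"
    unfolding y_def using T0(2)[OF T0_le_T] one_le_power[of "2::real" "Suc n"]
    by (simp add: divide_le_eq)
  also have "dw (T (Suc n)) \<le> dw t"
    using n T0(1) T0_le_T[of n] by (intro dw_antimono) auto
  finally have "y.phi (dw t) \<le> real (Suc n) + 2"
    by (rule y.phi_le)
  then show ?thesis
    using that n T_small_at[of n t] by simp
qed

lemma w_smallo_wt: "w \<in> o[at_top](wt)"
proof (rule landau_o.smallI)
  fix c :: real
  assume c: "0 < c"
  obtain n :: nat where n: "8 / c \<le> real n"
    using real_arch_simple by blast
  have "\<forall>\<^sub>F t in at_top. dw t < y n \<and> T0 \<le> t"
    using order_tendstoD(2)[OF dw_tendsto_0 y.pos] eventually_ge_at_top[of T0]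
    by (rule eventually_conj)
  then obtain a where a: "dw a < y n" "T0 \<le> a"
    using eventually_happens'[of at_top] by force
  have phi_a: "real n + 1 \<le> y.phi (dw a)"
    using T0(2)[OF a(2)] a(1) by (intro y.phi_ge) auto
  have "\<forall>\<^sub>F t in at_top. 8 * w a \<le> w t"
    using w_at_top by (simp add: filterlim_at_top)
  then show "\<forall>\<^sub>F t in at_top. norm (w t) \<le> c * norm (wt t)"
    using eventually_ge_at_top[of a]
  proof eventually_elim
    case (elim t)
    have w_t: "0 \<le> w t"
      using elim a T0(1) by (intro w_nonneg) simp
    have "(real n + 1) * (w t / 8) \<le> y.phi (dw a) * (w t / 8)"
      using phi_a w_t by (intro mult_right_mono) auto
    also have "\<dots> \<le> y.phi (dw a) * (w t / 4 - w a)"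
      using elim phi_a by (intro mult_left_mono) auto
    also have "\<dots> \<le> wt t"
      using wt_lower[OF a(2) elim(2)] .
    finally have wt_t: "(real n + 1) * w t \<le> 8 * wt t"
      by simp
    have "8 \<le> c * (real n + 1)"
      using n c by (simp add: field_simps)
    then have "8 * w t \<le> (c * (real n + 1)) * w t"
      using w_t by (rule mult_right_mono)
    also have "\<dots> = c * ((real n + 1) * w t)"
      by simp
    also have "\<dots> \<le> c * (8 * wt t)"
      using wt_t c by (intro mult_left_mono) auto
    finally have "w t \<le> c * wt t"
      by simp
    then show ?case
      using w_t wt_nonneg[of t] elim a T0(1) by simp
  qed
qed

lemma wt_smallo:
  fixes F :: "real \<Rightarrow> real"
  assumes F: "filterlim F at_top at_top"
    and F_dominates: "\<And>n t. small_at n t \<Longrightarrow> (real n + 3)\<^sup>2 * w t \<le> F t"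
  shows "wt \<in> o[at_top](F)"
proof (rule landau_o.smallI)
  fix c :: real
  assume c: "0 < c"
  obtain N :: nat where N: "2 / c \<le> real N"
    using real_arch_simple by blast
  have "\<forall>\<^sub>F t in at_top. 2 / c * wt T0 \<le> F t"
    using F by (simp add: filterlim_at_top)
  then show "\<forall>\<^sub>F t in at_top. norm (wt t) \<le> c * norm (F t)"
    using eventually_ge_at_top[of "T N"]
  proof eventually_elim
    case (elim t)
    obtain n where n: "N \<le> n" "small_at n t" "y.phi (dw t) \<le> real n + 3"
      using phi_dw_le[OF elim(2)] .
    have t: "T0 \<le> t" "0 \<le> w t"
      using n(2) T0(1) w_nonneg[of t] unfolding small_at_def by auto
    have wt_T0: "wt T0 \<le> c / 2 * F t"
      using elim(1) c by (simp add: field_simps)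
    then have "0 \<le> c / 2 * F t"
      using wt_nonneg[of T0] T0(1) by linarith
    then have F_t: "0 \<le> F t"
      using c by (simp add: zero_le_mult_iff)
    have "y.phi (dw t) * w t \<le> (real n + 3) * w t"
      using n(3) t(2) by (rule mult_right_mono)
    also have "\<dots> \<le> F t / (real n + 3)"
      using F_dominates[OF n(2)] by (simp add: field_simps power2_eq_square)
    also have "\<dots> \<le> F t / (real N + 3)"
      using n(1) F_t by (intro divide_left_mono) auto
    also have "\<dots> \<le> c / 2 * F t"
    proof -
      have "1 / (real N + 3) \<le> c / 2"
        using N c by (simp add: field_simps)
      then have "F t * (1 / (real N + 3)) \<le> F t * (c / 2)"
        using F_t by (rule mult_left_mono)
      then show ?thesis
        by (simp add: mult.commute)
    qed
    finally have "wt t \<le> c * F t"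
      using wt_upper[OF t(1)] wt_T0 by linarith
    then show ?case
      using wt_nonneg[of t] t(1) T0(1) F_t by simp
  qed
qed

lemma wt_smallo_id: "wt \<in> o[at_top](\<lambda>t. t)"
  by (rule wt_smallo[OF filterlim_ident]) (simp add: small_at_def)

lemma wt_smallo_f: "wt \<in> o[at_top](f)"
proof (rule wt_smallo)
  have "\<forall>\<^sub>F t in at_top. w t \<le> f t"
    using eventually_small_at[of 0]
  proof eventually_elim
    case (elim t)
    then show ?case
      using w_nonneg[of t] T0(1) unfolding small_at_def by simp
  qed
  then show "filterlim f at_top at_top"
    using filterlim_at_top_mono[OF w_at_top] by blast
qed (simp add: small_at_def)

lemma wt_le_tail:
  assumes "T 0 \<le> t"
  shows "wt t \<le> max (wt T0) 1 * ((w t + 1) / sqrt (tail t))"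
proof -
  obtain n where n: "small_at n t" "y.phi (dw t) \<le> real n + 3"
    using phi_dw_le[OF assms] .
  define \<rho> where "\<rho> = 1 / sqrt (tail t)"
  define M where "M = max (wt T0) 1"
  have t: "T0 \<le> t" "0 < tail t" "0 \<le> w t"
    using n(1) T0(1) tail_pos[of t] w_nonneg[of t] unfolding small_at_def by auto
  have "sqrt (tail t) \<le> sqrt (1 / (real n + 3)\<^sup>2)"
    using n(1) unfolding small_at_def by simp
  then have "real n + 3 \<le> \<rho>"
    unfolding \<rho>_def using t(2) by (simp add: real_sqrt_divide field_simps)
  then have \<rho>: "y.phi (dw t) \<le> \<rho>" "1 \<le> \<rho>"
    using n(2) by linarith+
  have "wt t \<le> wt T0 + y.phi (dw t) * w t"
    using wt_upper[OF t(1)] .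
  also have "\<dots> \<le> M * \<rho> + (M * \<rho>) * w t"
  proof (rule add_mono)
    have M: "wt T0 \<le> M" "1 \<le> M"
      unfolding M_def by auto
    have "M * 1 \<le> M * \<rho>"
      using \<rho>(2) M(2) by (intro mult_left_mono) auto
    then show "wt T0 \<le> M * \<rho>"
      using M(1) by simp
    have "1 * \<rho> \<le> M * \<rho>"
      using \<rho>(2) M(2) by (intro mult_right_mono) auto
    then show "y.phi (dw t) * w t \<le> (M * \<rho>) * w t"
      using \<rho>(1) t(3) by (intro mult_right_mono) auto
  qed
  also have "\<dots> = M * ((w t + 1) / sqrt (tail t))"
    unfolding \<rho>_def by (simp add: algebra_simps add_divide_distrib)
  finally show ?thesis
    unfolding M_def .
qed

lemma wt_div_square_integrable: "(\<lambda>t. wt t / t\<^sup>2) integrable_on {1..}"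
proof -
  have T0_T: "4 \<le> T 0"
    using T0_le_T[of 0] T0(1) by simp
  have left: "(\<lambda>t. wt t / t\<^sup>2) integrable_on {1..T 0}"
    by (intro integrable_continuous_interval continuous_intros
        continuous_on_subset[OF wt_continuous]) auto
  have right: "(\<lambda>t. wt t / t\<^sup>2) integrable_on {T 0..}"
  proof (rule measurable_bounded_by_integrable_imp_integrable_real)
    show "(\<lambda>t. wt t / t\<^sup>2) \<in> borel_measurable (lebesgue_on {T 0..})"
      using T0_T
      by (intro continuous_imp_measurable_on_sets_lebesgue continuous_intros
          continuous_on_subset[OF wt_continuous]) auto
    show "(\<lambda>t. max (wt T0) 1 * ((w t + 1) / t\<^sup>2 / sqrt (tail t))) integrable_on {T 0..}"
      using T0_T
      by (intro integrable_on_cmult_left[where 'b=real, simplified] integrable_div_sqrt_tail) simp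
    show "\<bar>wt t / t\<^sup>2\<bar> \<le> max (wt T0) 1 * ((w t + 1) / t\<^sup>2 / sqrt (tail t))"
      if "t \<in> {T 0..}" for t
    proof -
      have "wt t / t\<^sup>2 \<le> max (wt T0) 1 * ((w t + 1) / sqrt (tail t)) / t\<^sup>2"
        using that by (intro divide_right_mono wt_le_tail) auto
      moreover have "0 \<le> wt t"
        using that T0_T by (intro wt_nonneg) simp
      ultimately show ?thesis
        by (simp add: mult.commute)
    qed
  qed simp
  have "negligible ({1..T 0} \<inter> {T 0..})"
    using T0_T by (simp add: Int_atLeastAtMost)
  moreover have "{1..} = {1..T 0} \<union> {T 0..}"
    using T0_T by auto
  ultimately show ?thesis
    using integrable_Un'[OF left right] by simp
qed

lemma concave_weight_wt: "concave_weight wt"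
proof (rule concave_weightI[OF wt_continuous _ wt_nonneg wt_concave wt_exp_convex wt_smallo_id])
  show "mono_on {0..} wt"
    by (rule mono_onI) (auto intro: wt_mono)
  show "(\<lambda>t. ln t) \<in> o[at_top](wt)"
    by (rule landau_o.small_trans[OF ln_smallo_w w_smallo_wt])
qed

lemma non_quasianalytic_wt: "non_quasianalytic wt"
  unfolding non_quasianalytic_def by (rule wt_div_square_integrable)

end

theorem lemma6p2:
  fixes \<omega> f :: "real \<Rightarrow> real"
  assumes "concave_weight \<omega>" and "non_quasianalytic \<omega>"
    and "\<forall>t\<ge>0. f t \<ge> 0"
    and "\<omega> \<in> o[at_top](f)"
  shows "\<exists>\<omega>'. concave_weight \<omega>' \<and> non_quasianalytic \<omega>' \<and>
           \<omega> \<in> o[at_top](\<omega>') \<and> \<omega>' \<in> o[at_top](f)"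
proof -
  interpret nq_concave_weight_below \<omega> f
    using assms by unfold_locales auto
  show ?thesis
    using concave_weight_wt non_quasianalytic_wt w_smallo_wt wt_smallo_f by blast
qed

end
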